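(* Let $x_1,\dots,x_N\in\mathbb{R}^D$ be $N\ge 2$ pairwise distinct points, and let $x_1',\dots,x_N'\in\mathbb{R}^D$ satisfy $\|x_n-x_n'\|\le\varepsilon$ for all $n=1,\dots,N$, where $\|\cdot\|$ is the Euclidean norm and $$\varepsilon\le \tfrac12\min_{n_1\neq n_2}\|x_{n_1}-x_{n_2}\|.$$ Then for every integer $K\ge 1$ and every choice of indices $n_1,\dots,n_K\in\{1,\dots,N\}$, with the cyclic convention $n_{K+1}:=n_1$, $$\sum_{k=1}^{K}\tfrac12\|x_{n_k}-x_{n_k}'\|^2\;\le\;\sum_{k=1}^{K}\tfrac12\|x_{n_k}-x_{n_{k+1}}'\|^2 .$$ That is, the set $\{(x_1,x_1'),\dots,(x_N,x_N')\}$ (equivalently, the map $x_n\mapsto x_n'$) is $c$-cyclically monotone for the quadratic cost $c(x,y)=\tfrac12\|x-y\|^2$.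
   Context: A set of pairs $\{(x_n,y_n)\}_{n=1}^N$ (or the map $x_n\mapsto y_n$) is called $c$-cyclically monotone for a cost function $c$ if for every $K\ge1$ and all indices $n_1,\dots,n_K$ (with $n_{K+1}:=n_1$) one has $\sum_{k=1}^K c(x_{n_k},y_{n_k})\le\sum_{k=1}^K c(x_{n_k},y_{n_{k+1}})$. *)

theory Defs
  imports "HOL-Analysis.Analysis"
begin

definition cyclically_monotone ::
  "('a \<Rightarrow> 'b \<Rightarrow> real) \<Rightarrow> nat \<Rightarrow> (nat \<Rightarrow> 'a) \<Rightarrow> (nat \<Rightarrow> 'b) \<Rightarrow> bool" where
  "cyclically_monotone c N x y \<longleftrightarrow>
     (\<forall>K::nat. \<forall>ns::nat \<Rightarrow> nat. K \<ge> 1 \<longrightarrow> (\<forall>k\<in>{1..K}. ns k \<in> {1..N}) \<longrightarrow>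
        (\<Sum>k=1..K. c (x (ns k)) (y (ns k)))
          \<le> (\<Sum>k=1..K. c (x (ns k)) (y (ns (if k = K then 1 else Suc k)))))"

definition quad_cost :: "'a::real_normed_vector \<Rightarrow> 'a \<Rightarrow> real" where
  "quad_cost u v = (1/2) * (norm (u - v))\<^sup>2"

end

theory Submission
  imports Defs
begin

text \<open>Each point is at least as close to its own perturbation as to any other one: if x'_b lay
  closer to x_a than x'_a does, then x_a and x_b would both be within \<epsilon> of x'_b, contradicting
  the separation 2\<epsilon> \<le> |x_a - x_b|. Hence every term of the cyclic sum is dominated termwise.\<close>

lemma cyclically_monotone_if_diagonal_minimal:
  assumes "\<And>a b. a \<in> {1..N} \<Longrightarrow> b \<in> {1..N} \<Longrightarrow> c (x a) (y a) \<le> c (x a) (y b)"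
  shows "cyclically_monotone c N x y"
  unfolding cyclically_monotone_def
proof (intro allI impI)
  fix K :: nat and ns :: "nat \<Rightarrow> nat"
  assume "1 \<le> K" and ns: "\<forall>k\<in>{1..K}. ns k \<in> {1..N}"
  show "(\<Sum>k=1..K. c (x (ns k)) (y (ns k)))
        \<le> (\<Sum>k=1..K. c (x (ns k)) (y (ns (if k = K then 1 else Suc k))))"
  proof (rule sum_mono)
    fix k assume k: "k \<in> {1..K}"
    then have "ns (if k = K then 1 else Suc k) \<in> {1..N}"
      using ns \<open>1 \<le> K\<close> by auto
    then show "c (x (ns k)) (y (ns k)) \<le> c (x (ns k)) (y (ns (if k = K then 1 else Suc k)))"
      using assms ns k by blast
  qed
qed

lemma norm_diff_le_if_separated:
  fixes u u' v' v :: "'a::real_normed_vector"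
  assumes "norm (u - u') \<le> e" and "norm (v - v') \<le> e" and "2 * e \<le> norm (u - v)"
  shows "norm (u - u') \<le> norm (u - v')"
proof -
  have "norm (u - v) \<le> norm (u - v') + norm (v - v')"
    using norm_triangle_ineq4[of "u - v'" "v - v'"] by (simp add: algebra_simps)
  with assms show ?thesis by linarith
qed

lemma quad_cost_mono_norm:
  "norm (u - v) \<le> norm (u - w) \<Longrightarrow> quad_cost u v \<le> quad_cost u w"
  unfolding quad_cost_def by (simp add: power_mono)

lemma Min_pairwise_dist_le:
  assumes "i \<in> I" and "j \<in> I" and "i \<noteq> j" and "finite I"
  shows "Min {dist (x i) (x j) | i j. i \<in> I \<and> j \<in> I \<and> i \<noteq> j} \<le> dist (x i) (x j)"
proof (rule Min_le)
  have "{dist (x i) (x j) | i j. i \<in> I \<and> j \<in> I \<and> i \<noteq> j}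
        \<subseteq> (\<lambda>(i, j). dist (x i) (x j)) ` (I \<times> I)" by force
  then show "finite {dist (x i) (x j) | i j. i \<in> I \<and> j \<in> I \<and> i \<noteq> j}"
    using \<open>finite I\<close> by (meson finite_SigmaI finite_imageI finite_subset)
qed (use assms in blast)

theorem mainTheorem1:
  fixes x x' :: "nat \<Rightarrow> real ^ 'D" and N :: nat and \<epsilon> :: real
  assumes "N \<ge> 2"
    and "\<forall>i\<in>{1..N}. \<forall>j\<in>{1..N}. i \<noteq> j \<longrightarrow> x i \<noteq> x j"
    and "\<forall>n\<in>{1..N}. norm (x n - x' n) \<le> \<epsilon>"
    and "\<epsilon> \<le> (1/2) * Min {norm (x i - x j) | i j. i \<in> {1..N} \<and> j \<in> {1..N} \<and> i \<noteq> j}"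
  shows "cyclically_monotone quad_cost N x x'"
proof (rule cyclically_monotone_if_diagonal_minimal)
  fix a b assume a: "a \<in> {1..N}" and b: "b \<in> {1..N}"
  show "quad_cost (x a) (x' a) \<le> quad_cost (x a) (x' b)"
  proof (cases "a = b")
    case False
    then have "2 * \<epsilon> \<le> norm (x a - x b)"
      using Min_pairwise_dist_le[of a "{1..N}" b x] a b assms(4) by (simp add: dist_norm)
    then show ?thesis
      using norm_diff_le_if_separated assms(3) a b quad_cost_mono_norm by blast
  qed simp
qed

end
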